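(* Let $C$ be a subcubic chain of a graph $G$ and let $e$ be a cut-edge of $C$. Then $\delta(G,e)=\delta(G/C,e_{G/C})+\delta(\overline C,e_C)$ and $\widehat\delta(G,e)=\widehat\delta(G/C,e_{G/C})+\widehat\delta(\overline C,e_C)$.
   Context: Graphs are finite and may have loops and parallel edges unless called simple; a loop contributes 2 to the degree of its vertex, and a graph is subcubic if every vertex has degree at most 3. $n(G)$ is the number of vertices of $G$ and $n_2(G)$ the number of vertices of degree 2. A cycle is a connected 2-regular subgraph (so a loop, or a pair of parallel edges, forms a cycle). An even cover of $G$ is a spanning subgraph $F$ in which every vertex has degree 0 or 2; its excess is $\mathrm{exc}(F)=2c(F)+i(F)$, where $c(F)$ is the number of cycles and $i(F)$ the number of isolated vertices of $F$. For $e\in E(G)$, let $\mathcal E(G,e)$ (resp. $\widehat{\mathcal E}(G,e)$) be the set of even covers of $G$ containing (resp. not containing) $e$, and define $\mathrm{exc}(G,e)=\min_{F\in\mathcal E(G,e)}\mathrm{exc}(F)-2$, $\widehat{\mathrm{exc}}(G,e)=\min_{F\in\widehat{\mathcal E}(G,e)}\mathrm{exc}(F)$, $\delta(G,e)=\mathrm{exc}(G,e)-\frac{n(G)+n_2(G)}4$, $\widehat\delta(G,e)=\widehat{\mathrm{exc}}(G,e)-\frac{n(G)+n_2(G)}4$. A subcubic chain is a simple connected subcubic graph $C$ written as an alternating sequence $C=x e_0 B_1 e_1 B_2\cdots B_k e_k y$ ($k\ge 0$) such that: $\{e_0,\dots,e_k\}$ is exactly the set of cut-edges of $C$; the connected components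 of $C-\{e_0,\dots,e_k\}$ are $B_0,B_1,\dots,B_{k+1}$ with $V(B_0)=\{x\}$, $V(B_{k+1})=\{y\}$; each $B_i$ ($1\le i\le k$) is a single vertex or 2-connected; and $e_i$ joins a vertex of $B_i$ to a vertex of $B_{i+1}$ ($0\le i\le k$). Its endpoints are $x,y$ and its end edges are $e_0,e_k$. It is trivial if $k=0$. If $k\ge1$, let $x_1$ be the endpoint of $e_0$ in $B_1$ and $y_k$ the endpoint of $e_k$ in $B_k$; the closure of $C$ is $(\overline C,e_C)$ where $\overline C$ is obtained from $C-\{x,y\}$ by adding a new edge $e_C=x_1y_k$. If $G$ is a graph and $C=xe_0B_1\cdots B_ke_ky$ is a nontrivial subcubic chain contained in $G$ such that $C-\{x,y\}$ is a connected component of $G-\{e_0,e_k\}$, then $C$ is a subcubic chain of $G$; $G/C$ denotes the graph obtained from $G$ by deleting $V(C)\setminus\{x,y\}$ and adding a new edge $e_{G/C}$ joining $x$ and $y$. *)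

theory Defs
  imports Complex_Main "HOL-Library.Uprod" "HOL-Library.Extended_Real"
begin

text \<open>Finite multigraphs with loops and parallel edges: every edge has an unordered
  pair of endpoints (a loop has endpoints Upair v v).\<close>

record ('v, 'e) mgraph =
  verts :: "'v set"
  edges :: "'e set"
  ends  :: "'e \<Rightarrow> 'v uprod"

definition wf_graph :: "('v, 'e) mgraph \<Rightarrow> bool" where
  "wf_graph G \<longleftrightarrow> finite (verts G) \<and> finite (edges G) \<and>
     (\<forall>e\<in>edges G. set_uprod (ends G e) \<subseteq> verts G)"

text \<open>Degree of v in the spanning subgraph with edge set S (a loop counts 2).\<close>
definition degS :: "('v, 'e) mgraph \<Rightarrow> 'e set \<Rightarrow> 'v \<Rightarrow> nat" where
  "degS G S v = card {e\<in>S. v \<in> set_uprod (ends G e)} + card {e\<in>S. ends G e = Upair v v}"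

definition deg :: "('v, 'e) mgraph \<Rightarrow> 'v \<Rightarrow> nat" where
  "deg G v = degS G (edges G) v"

definition adjS :: "('v, 'e) mgraph \<Rightarrow> 'e set \<Rightarrow> 'v \<Rightarrow> 'v \<Rightarrow> bool" where
  "adjS G S u v \<longleftrightarrow> (\<exists>e\<in>S. ends G e = Upair u v)"

definition comps :: "('v, 'e) mgraph \<Rightarrow> 'e set \<Rightarrow> 'v set set" where
  "comps G S = {{v\<in>verts G. (adjS G S)\<^sup>*\<^sup>* u v} | u. u \<in> verts G}"

definition conn_on :: "('v, 'e) mgraph \<Rightarrow> 'e set \<Rightarrow> 'v set \<Rightarrow> bool" where
  "conn_on G S K \<longleftrightarrow> (\<forall>u\<in>K. \<forall>v\<in>K. (\<lambda>a b. a \<in> K \<and> b \<in> K \<and> adjS G S a b)\<^sup>*\<^sup>* u v)"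

definition connected_graph :: "('v, 'e) mgraph \<Rightarrow> bool" where
  "connected_graph G \<longleftrightarrow> verts G \<noteq> {} \<and> conn_on G (edges G) (verts G)"

definition two_connected_on :: "('v, 'e) mgraph \<Rightarrow> 'e set \<Rightarrow> 'v set \<Rightarrow> bool" where
  "two_connected_on G S K \<longleftrightarrow> card K \<ge> 3 \<and> conn_on G S K \<and> (\<forall>w\<in>K. conn_on G S (K - {w}))"

definition simple_graph :: "('v, 'e) mgraph \<Rightarrow> bool" where
  "simple_graph G \<longleftrightarrow> (\<forall>e\<in>edges G. card (set_uprod (ends G e)) = 2) \<and>
     (\<forall>e\<in>edges G. \<forall>f\<in>edges G. ends G e = ends G f \<longrightarrow> e = f)"

definition subcubic :: "('v, 'e) mgraph \<Rightarrow> bool" where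
  "subcubic G \<longleftrightarrow> (\<forall>v\<in>verts G. deg G v \<le> 3)"

definition cut_edge :: "('v, 'e) mgraph \<Rightarrow> 'e \<Rightarrow> bool" where
  "cut_edge G e \<longleftrightarrow> e \<in> edges G \<and> card (comps G (edges G - {e})) > card (comps G (edges G))"

definition subgraph :: "('v, 'e) mgraph \<Rightarrow> ('v, 'e) mgraph \<Rightarrow> bool" where
  "subgraph C G \<longleftrightarrow> verts C \<subseteq> verts G \<and> edges C \<subseteq> edges G \<and>
     (\<forall>e\<in>edges C. ends C e = ends G e)"

text \<open>Even covers, identified with their edge sets S (spanning subgraph (V(G),S)).\<close>
definition even_cover :: "('v, 'e) mgraph \<Rightarrow> 'e set \<Rightarrow> bool" where
  "even_cover G S \<longleftrightarrow> S \<subseteq> edges G \<and> (\<forall>v\<in>verts G. degS G S v = 0 \<or> degS G S v = 2)"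

text \<open>c(F): components containing an edge (each is a cycle); i(F): isolated vertices.\<close>
definition exc_of :: "('v, 'e) mgraph \<Rightarrow> 'e set \<Rightarrow> nat" where
  "exc_of G S = 2 * card {K\<in>comps G S. \<exists>v\<in>K. degS G S v \<noteq> 0}
               + card {v\<in>verts G. degS G S v = 0}"

text \<open>Minimum over an empty set is +infinity.\<close>
definition exc_with :: "('v, 'e) mgraph \<Rightarrow> 'e \<Rightarrow> ereal" where
  "exc_with G e = (INF S\<in>{S. even_cover G S \<and> e \<in> S}. ereal (real (exc_of G S))) - 2"

definition exc_without :: "('v, 'e) mgraph \<Rightarrow> 'e \<Rightarrow> ereal" where
  "exc_without G e = (INF S\<in>{S. even_cover G S \<and> e \<notin> S}. ereal (real (exc_of G S)))"

definition nn2 :: "('v, 'e) mgraph \<Rightarrow> real" where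
  "nn2 G = real (card (verts G)) + real (card {v\<in>verts G. deg G v = 2})"

definition delta :: "('v, 'e) mgraph \<Rightarrow> 'e \<Rightarrow> ereal" where
  "delta G e = exc_with G e - ereal (nn2 G / 4)"

definition delta_hat :: "('v, 'e) mgraph \<Rightarrow> 'e \<Rightarrow> ereal" where
  "delta_hat G e = exc_without G e - ereal (nn2 G / 4)"

text \<open>Subcubic chain C = x e_0 B_1 e_1 ... B_k e_k y, with es = [e_0,...,e_k]
  and Bs = [B_0,...,B_{k+1}] (vertex sets of the components of C - cut edges).\<close>
definition subcubic_chain ::
  "('v, 'e) mgraph \<Rightarrow> 'v \<Rightarrow> 'e list \<Rightarrow> 'v set list \<Rightarrow> 'v \<Rightarrow> bool" where
  "subcubic_chain C x es Bs y \<longleftrightarrow>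
     wf_graph C \<and> simple_graph C \<and> connected_graph C \<and> subcubic C \<and>
     es \<noteq> [] \<and> length Bs = length es + 1 \<and>
     distinct es \<and> set es = {e. cut_edge C e} \<and>
     distinct Bs \<and> set Bs = comps C (edges C - set es) \<and>
     hd Bs = {x} \<and> last Bs = {y} \<and>
     (\<forall>i. 1 \<le> i \<and> i < length Bs - 1 \<longrightarrow>
        card (Bs ! i) = 1 \<or> two_connected_on C (edges C - set es) (Bs ! i)) \<and>
     (\<forall>i<length es. \<exists>u\<in>Bs ! i. \<exists>v\<in>Bs ! (i + 1). ends C (es ! i) = Upair u v)"

definition chain_of ::
  "('v, 'e) mgraph \<Rightarrow> ('v, 'e) mgraph \<Rightarrow> 'v \<Rightarrow> 'e list \<Rightarrow> 'v set list \<Rightarrow> 'v \<Rightarrow> bool" where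
  "chain_of G C x es Bs y \<longleftrightarrow>
     subgraph C G \<and> subcubic_chain C x es Bs y \<and> length es \<ge> 2 \<and>
     verts C - {x, y} \<in> comps G (edges G - {hd es, last es}) \<and>
     {f\<in>edges C. set_uprod (ends C f) \<inter> {x, y} = {}} =
       {f\<in>edges G - {hd es, last es}. set_uprod (ends G f) \<subseteq> verts C - {x, y}}"

text \<open>Closure: C - {x,y} plus the new edge None joining x_1 and y_k.\<close>
definition closure_chain ::
  "('v, 'e) mgraph \<Rightarrow> 'v \<Rightarrow> 'e list \<Rightarrow> 'v \<Rightarrow> ('v, 'e option) mgraph" where
  "closure_chain C x es y =
     (let x1 = (THE u. ends C (hd es) = Upair x u);
          yk = (THE u. ends C (last es) = Upair u y)
      in \<lparr> verts = verts C - {x, y},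
           edges = insert None (Some ` {f\<in>edges C. set_uprod (ends C f) \<inter> {x, y} = {}}),
           ends = (\<lambda>oe. case oe of None \<Rightarrow> Upair x1 yk | Some f \<Rightarrow> ends C f) \<rparr>)"

text \<open>G/C: delete V(C) - {x,y} and add the new edge None joining x and y.\<close>
definition contract_chain ::
  "('v, 'e) mgraph \<Rightarrow> ('v, 'e) mgraph \<Rightarrow> 'v \<Rightarrow> 'v \<Rightarrow> ('v, 'e option) mgraph" where
  "contract_chain G C x y =
     \<lparr> verts = verts G - (verts C - {x, y}),
       edges = insert None (Some ` {f\<in>edges G. set_uprod (ends G f) \<inter> (verts C - {x, y}) = {}}),
       ends = (\<lambda>oe. case oe of None \<Rightarrow> Upair x y | Some f \<Rightarrow> ends G f) \<rparr>"

end

theory Submission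
  imports Defs
begin

text \<open>
  Removing the inner part W = V(C) - {x, y} of the chain leaves a 2-edge cut {e_0, e_k}, and
  every even cover contains all cut-edges of the chain or none of them: the cut-edges leaving
  B_1 \<union> ... \<union> B_i are exactly e_0 and e_i, and an even cover meets every edge cut in an even
  number of edges. Hence an even cover of G is the same as a pair of even covers of G/C
  (outside W) and of the closure (inside W) which agree on the new edge. Isolated vertices
  and cycles are distributed between the two sides, except that a cycle through e_0 and e_k
  becomes one cycle on each side; so the excess is additive, up to the constant 2 when the
  cover uses e. Degrees are preserved as well, so n + n_2 is additive, and minimising over
  the covers gives both identities.
\<close>

section \<open>Degree sums and parity\<close>

definition inc :: "'v set \<Rightarrow> 'v uprod \<Rightarrow> nat" where
  "inc K u = card (set_uprod u \<inter> K) + (if \<exists>v\<in>K. u = Upair v v then 1 else 0)"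

lemma inc_Upair: "inc K (Upair a b) = (if a \<in> K then 1 else 0) + (if b \<in> K then 1 else 0)"
  unfolding inc_def by (cases "a = b") (auto simp: card_insert_if Int_insert_left)

lemma odd_inc_Upair: "odd (inc K (Upair a b)) \<longleftrightarrow> (a \<in> K \<longleftrightarrow> b \<notin> K)"
  by (simp add: inc_Upair)

lemma card_filter_eq_sum: "finite S \<Longrightarrow> card {e\<in>S. P e} = (\<Sum>e\<in>S. if P e then 1 else 0)"
  by (simp add: sum.If_cases Int_def conj_commute)

lemma inc_singleton: "inc {v} u = (if v \<in> set_uprod u then 1 else 0) + (if u = Upair v v then 1 else 0)"
  by (cases u) (auto simp: inc_Upair)

lemma degS_eq_sum_inc: "finite S \<Longrightarrow> degS H S v = (\<Sum>f\<in>S. inc {v} (ends H f))"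
  by (simp add: degS_def inc_singleton card_filter_eq_sum sum.distrib)

lemma degS_pos:
  assumes "finite S" "f \<in> S" "v \<in> set_uprod (ends H f)"
  shows "degS H S v \<noteq> 0"
  using assms by (auto simp: degS_def card_eq_0_iff)

lemma sum_inc_singleton: "finite K \<Longrightarrow> (\<Sum>v\<in>K. inc {v} u) = inc K u"
  by (cases u) (simp add: inc_Upair sum.distrib)

lemma sum_degS_eq_sum_inc:
  assumes "finite S" "finite K"
  shows "(\<Sum>v\<in>K. degS H S v) = (\<Sum>f\<in>S. inc K (ends H f))"
  using assms by (simp add: degS_eq_sum_inc sum_inc_singleton flip: sum.swap[of _ K])

lemma even_card_crossing_edges:
  assumes "finite S" "finite K" "\<forall>v\<in>K. even (degS H S v)"
  shows "even (card {f\<in>S. odd (inc K (ends H f))})"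
proof -
  have "even (\<Sum>v\<in>K. degS H S v)" using assms(3) by (intro dvd_sum) auto
  then show ?thesis by (simp add: sum_degS_eq_sum_inc[OF assms(1,2)] even_sum_iff[OF assms(1)])
qed

lemma even_cover_finite: "wf_graph H \<Longrightarrow> even_cover H S \<Longrightarrow> finite S"
  by (auto simp: wf_graph_def even_cover_def intro: finite_subset)

lemma even_cover_degS_even: "even_cover H S \<Longrightarrow> v \<in> verts H \<Longrightarrow> even (degS H S v)"
  by (auto simp: even_cover_def)

lemma even_cover_crossing_pair:
  assumes wf: "wf_graph H" and ec: "even_cover H S" and K: "K \<subseteq> verts H"
    and crossing: "\<And>f. f \<in> edges H \<Longrightarrow> odd (inc K (ends H f)) \<longleftrightarrow> f = e \<or> f = e'"
    and "e \<noteq> e'"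
  shows "e \<in> S \<longleftrightarrow> e' \<in> S"
proof -
  have "S \<subseteq> edges H" using ec by (simp add: even_cover_def)
  then have "{f\<in>S. odd (inc K (ends H f))} = S \<inter> {e, e'}" using crossing by auto
  moreover have "finite K" using wf K by (auto simp: wf_graph_def intro: finite_subset)
  moreover have "\<forall>v\<in>K. even (degS H S v)" using K even_cover_degS_even[OF ec] by auto
  ultimately have "even (card (S \<inter> {e, e'}))"
    using even_card_crossing_edges[OF even_cover_finite[OF wf ec]] by metis
  then show ?thesis using \<open>e \<noteq> e'\<close> by (cases "e \<in> S"; cases "e' \<in> S") auto
qed

section \<open>Components and excess\<close>

lemma wf_graph_Upair_verts:
  "wf_graph H \<Longrightarrow> f \<in> edges H \<Longrightarrow> ends H f = Upair a b \<Longrightarrow> a \<in> verts H \<and> b \<in> verts H"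
  unfolding wf_graph_def by (metis insert_subset set_uprod_simps)

lemma symp_adjS: "symp (adjS H S)"
  by (rule sympI) (metis adjS_def Upair_inject)

lemma adjS_reach_sym: "(adjS H S)\<^sup>*\<^sup>* a b \<Longrightarrow> (adjS H S)\<^sup>*\<^sup>* b a"
  using sympD[OF symp_rtranclp[OF symp_adjS]] .

lemma adjS_reach_if_edge: "f \<in> S \<Longrightarrow> ends H f = Upair a b \<Longrightarrow> (adjS H S)\<^sup>*\<^sup>* a b"
  by (rule r_into_rtranclp) (auto simp: adjS_def)

definition comp_of :: "('v, 'e) mgraph \<Rightarrow> 'e set \<Rightarrow> 'v \<Rightarrow> 'v set" where
  "comp_of H S u = {v\<in>verts H. (adjS H S)\<^sup>*\<^sup>* u v}"

lemma comps_eq_image_comp_of: "comps H S = comp_of H S ` verts H"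
  unfolding comps_def comp_of_def by auto

lemma comp_of_self: "u \<in> verts H \<Longrightarrow> u \<in> comp_of H S u"
  by (simp add: comp_of_def)

lemma comp_of_eq: "(adjS H S)\<^sup>*\<^sup>* u v \<Longrightarrow> comp_of H S u = comp_of H S v"
  unfolding comp_of_def by (meson adjS_reach_sym rtranclp_trans)

lemma comp_of_eq_iff: "u \<in> verts H \<Longrightarrow> comp_of H S u = comp_of H S v \<longleftrightarrow> (adjS H S)\<^sup>*\<^sup>* u v"
  using comp_of_eq comp_of_self by (metis adjS_reach_sym comp_of_def mem_Collect_eq)

lemma comps_subset: "K \<in> comps H S \<Longrightarrow> K \<subseteq> verts H"
  by (auto simp: comps_def)

lemma comps_nonempty: "K \<in> comps H S \<Longrightarrow> K \<noteq> {}"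
  by (auto simp: comps_eq_image_comp_of dest: comp_of_self)

lemma finite_comps: "finite (verts H) \<Longrightarrow> finite (comps H S)"
  by (simp add: comps_eq_image_comp_of)

lemma comps_disjoint: "K \<in> comps H S \<Longrightarrow> K' \<in> comps H S \<Longrightarrow> v \<in> K \<Longrightarrow> v \<in> K' \<Longrightarrow> K = K'"
  by (auto simp: comps_eq_image_comp_of comp_of_def intro!: comp_of_eq[unfolded comp_of_def])
    (meson adjS_reach_sym rtranclp_trans)

lemma comps_edge_closed:
  assumes "K \<in> comps H S" "a \<in> K" "f \<in> S" "ends H f = Upair a b" "b \<in> verts H"
  shows "b \<in> K"
proof -
  obtain u where u: "K = comp_of H S u" using assms(1) by (auto simp: comps_eq_image_comp_of)
  have "(adjS H S)\<^sup>*\<^sup>* u a" using assms(2) u by (simp add: comp_of_def)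
  moreover have "adjS H S a b" using assms(3,4) by (auto simp: adjS_def)
  ultimately show ?thesis using u assms(5) by (simp add: comp_of_def)
qed

text \<open>An even cover has no bridges: the component of one end of f in S - f has only f
  leaving it, contradicting the parity of the crossing edges.\<close>

lemma even_cover_edge_ends_connected:
  assumes wf: "wf_graph H" and ec: "even_cover H S" and f: "f \<in> S" "ends H f = Upair a b"
  shows "(adjS H (S - {f}))\<^sup>*\<^sup>* a b"
proof (rule ccontr)
  assume not_connected: "\<not> ?thesis"
  define K where "K = comp_of H (S - {f}) a"
  have "S \<subseteq> edges H" using ec by (simp add: even_cover_def)
  then have ab: "a \<in> verts H" "b \<in> verts H" using wf_graph_Upair_verts[OF wf] f by blast+
  have "{g\<in>S. odd (inc K (ends H g))} = {f}"
  proof (intro set_eqI iffI)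
    fix g assume g: "g \<in> {g\<in>S. odd (inc K (ends H g))}"
    obtain c d where cd: "ends H g = Upair c d" by (cases "ends H g") auto
    show "g \<in> {f}"
    proof (rule ccontr)
      assume "g \<notin> {f}"
      then have "(adjS H (S - {f}))\<^sup>*\<^sup>* c d"
        using g cd by (intro adjS_reach_if_edge[of g]) auto
      moreover have "c \<in> verts H" "d \<in> verts H"
        using wf_graph_Upair_verts[OF wf] g cd \<open>S \<subseteq> edges H\<close> by blast+
      ultimately have "c \<in> K \<longleftrightarrow> d \<in> K"
        unfolding K_def comp_of_def by (auto dest: adjS_reach_sym intro: rtranclp_trans)
      then show False using g cd by (simp add: odd_inc_Upair)
    qed
  qed (use f ab not_connected in \<open>auto simp: K_def comp_of_def odd_inc_Upair\<close>)
  moreover have "\<forall>v\<in>K. even (degS H S v)"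
    using even_cover_degS_even[OF ec] by (auto simp: K_def comp_of_def)
  moreover have "finite K" using wf by (auto simp: wf_graph_def K_def comp_of_def)
  ultimately show False
    using even_card_crossing_edges[OF even_cover_finite[OF wf ec]] by fastforce
qed

definition cycle_comps :: "('v, 'e) mgraph \<Rightarrow> 'e set \<Rightarrow> 'v set set" where
  "cycle_comps H S = {K\<in>comps H S. \<exists>v\<in>K. degS H S v \<noteq> 0}"

definition isolated_verts :: "('v, 'e) mgraph \<Rightarrow> 'e set \<Rightarrow> 'v set" where
  "isolated_verts H S = {v\<in>verts H. degS H S v = 0}"

lemma exc_of_eq: "exc_of H S = 2 * card (cycle_comps H S) + card (isolated_verts H S)"
  by (simp add: exc_of_def cycle_comps_def isolated_verts_def)

lemma INF_ereal_attained:
  assumes "s \<in> A" "\<forall>t\<in>A. h s \<le> (h t :: nat)"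
  shows "(INF t\<in>A. ereal (real (h t))) = ereal (real (h s))"
  using assms by (intro antisym INF_lower INF_greatest) auto

lemma INF_ereal_add_split:
  fixes h :: "'a \<Rightarrow> nat" and h1 :: "'b \<Rightarrow> nat" and h2 :: "'c \<Rightarrow> nat"
  assumes split: "\<And>S. S \<in> A \<Longrightarrow> f S \<in> B \<and> g S \<in> C \<and> h S + k = h1 (f S) + h2 (g S)"
    and glue: "\<And>s t. s \<in> B \<Longrightarrow> t \<in> C \<Longrightarrow> \<exists>S\<in>A. f S = s \<and> g S = t"
  shows "(INF S\<in>A. ereal (real (h S))) + ereal (real k)
       = (INF s\<in>B. ereal (real (h1 s))) + (INF t\<in>C. ereal (real (h2 t)))"
proof (cases "B = {} \<or> C = {}")
  case True
  then have "A = {}" using split by blast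
  moreover have "(INF s\<in>B. ereal (real (h1 s))) \<ge> 0" "(INF t\<in>C. ereal (real (h2 t))) \<ge> 0"
    by (auto intro: INF_greatest)
  ultimately show ?thesis using True by (auto simp: top_ereal_def)
next
  case False
  then obtain s1 s2 where s1: "s1 \<in> B" "\<forall>t\<in>B. h1 s1 \<le> h1 t"
    and s2: "s2 \<in> C" "\<forall>t\<in>C. h2 s2 \<le> h2 t"
    using ex_has_least_nat[of "\<lambda>t. t \<in> B" _ h1] ex_has_least_nat[of "\<lambda>t. t \<in> C" _ h2] by blast
  obtain S0 where S0: "S0 \<in> A" "f S0 = s1" "g S0 = s2" using glue[OF s1(1) s2(1)] by blast
  have "\<forall>t\<in>A. h S0 \<le> h t"
  proof
    fix t assume "t \<in> A"
    then show "h S0 \<le> h t" using split[of t] split[OF S0(1)] S0 s1 s2 by fastforce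
  qed
  then show ?thesis
    using split[OF S0(1)] S0
    by (simp add: INF_ereal_attained[OF S0(1)] INF_ereal_attained[OF s1] INF_ereal_attained[OF s2])
qed

lemma card_insert_Diff_Un_Diff:
  assumes "finite A" "finite B" "a \<in> A" "b \<in> B" "A \<inter> B = {}" "k \<notin> A \<union> B"
  shows "card (insert k ((A - {a}) \<union> (B - {b}))) + 1 = card A + card B"
proof -
  have fin: "finite ((A - {a}) \<union> (B - {b}))" using assms by simp
  have "card (insert k ((A - {a}) \<union> (B - {b}))) = Suc (card ((A - {a}) \<union> (B - {b})))"
    using assms by (intro card_insert_disjoint[OF fin]) blast
  also have "\<dots> = Suc (card (A - {a}) + card (B - {b}))"
    using assms by (subst card_Un_disjoint) auto
  also have "\<dots> = Suc (card A - 1 + (card B - 1))"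
    using assms by (simp add: card_Diff_singleton)
  finally have "card (insert k ((A - {a}) \<union> (B - {b}))) = Suc (card A - 1 + (card B - 1))" .
  moreover have "card A \<noteq> 0" "card B \<noteq> 0" using assms by auto
  ultimately show ?thesis by linarith
qed

lemma ereal_diff_add_split:
  fixes a b c :: ereal
  assumes "0 \<le> a" "0 \<le> b" "0 \<le> c" "a + 2 = b + c"
  shows "a - 2 = (b - 2) + (c - 2)"
  using assms by (cases a; cases b; cases c) auto

lemma ereal_add_diff_add:
  assumes "a \<noteq> -\<infinity>" "b \<noteq> -\<infinity>"
  shows "(a + b) - ereal (p + q) = (a - ereal p) + (b - ereal q)"
  using assms by (cases a; cases b) auto

lemma exc_with_not_MInfty: "exc_with H f \<noteq> -\<infinity>"
proof -
  have "(INF S\<in>{S. even_cover H S \<and> f \<in> S}. ereal (real (exc_of H S))) \<ge> 0"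
    by (rule INF_greatest) simp
  then show ?thesis
    unfolding exc_with_def by (cases "INF S\<in>{S. even_cover H S \<and> f \<in> S}. ereal (real (exc_of H S))") auto
qed

lemma exc_without_not_MInfty: "exc_without H f \<noteq> -\<infinity>"
proof -
  have "(INF S\<in>{S. even_cover H S \<and> f \<notin> S}. ereal (real (exc_of H S))) \<ge> 0"
    by (rule INF_greatest) simp
  then show ?thesis unfolding exc_without_def by auto
qed

section \<open>One side of a two-edge cut\<close>

locale cut_side =
  fixes G :: "('v, 'e) mgraph" and U :: "'v set" and e0 ek :: 'e and a a' b b' :: 'v
    and H :: "('v, 'e option) mgraph"
  assumes wf: "wf_graph G" and U_verts: "U \<subseteq> verts G"
    and e0: "e0 \<in> edges G" "ends G e0 = Upair a a'"
    and ek: "ek \<in> edges G" "ends G ek = Upair b b'"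
    and e0_ne_ek: "e0 \<noteq> ek"
    and inside_ends: "a \<in> U" "b \<in> U" and outside_ends: "a' \<notin> U" "b' \<notin> U"
    and no_other_crossing: "\<And>f. f \<in> edges G \<Longrightarrow> f \<noteq> e0 \<Longrightarrow> f \<noteq> ek \<Longrightarrow>
       set_uprod (ends G f) \<subseteq> U \<or> set_uprod (ends G f) \<inter> U = {}"
    and verts_H: "verts H = U"
    and edges_H: "edges H = insert None (Some ` {f\<in>edges G. set_uprod (ends G f) \<subseteq> U})"
    and ends_H_None: "ends H None = Upair a b"
    and ends_H_Some: "\<And>f. f \<in> edges G \<Longrightarrow> set_uprod (ends G f) \<subseteq> U \<Longrightarrow> ends H (Some f) = ends G f"
begin

definition inside :: "'e set" where
  "inside = {f\<in>edges G. set_uprod (ends G f) \<subseteq> U}"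

text \<open>In the trace of an edge set S of G, the new edge None stands for the pair e0, ek.\<close>

definition trace :: "'e set \<Rightarrow> 'e option set" where
  "trace S = (if e0 \<in> S then {None} else {}) \<union> Some ` (S \<inter> inside)"

lemma None_in_trace: "None \<in> trace S \<longleftrightarrow> e0 \<in> S"
  by (simp add: trace_def)

lemma Some_in_trace: "Some f \<in> trace S \<longleftrightarrow> f \<in> S \<and> f \<in> inside"
  by (auto simp: trace_def)

lemma finite_verts: "finite (verts G)" and finite_edges: "finite (edges G)"
  using wf by (auto simp: wf_graph_def)

lemma cut_edges_not_inside: "e0 \<notin> inside" "ek \<notin> inside"
  using e0 ek outside_ends by (auto simp: inside_def)

lemma edge_cases:
  assumes "f \<in> edges G"
  obtains "f \<in> inside" | "set_uprod (ends G f) \<inter> U = {}" | "f = e0" | "f = ek"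
  using no_other_crossing[OF assms] assms by (auto simp: inside_def)

lemma edges_H_eq: "edges H = insert None (Some ` inside)"
  by (simp add: edges_H inside_def)

lemma ends_H_inside: "f \<in> inside \<Longrightarrow> ends H (Some f) = ends G f"
  by (simp add: ends_H_Some inside_def)

lemma wf_H: "wf_graph H"
proof -
  have "set_uprod (ends H g) \<subseteq> verts H" if "g \<in> edges H" for g
    using that inside_ends by (auto simp: edges_H_eq ends_H_None ends_H_inside verts_H inside_def)
  moreover have "finite (verts H)" "finite (edges H)"
    using finite_verts finite_edges U_verts by (auto simp: verts_H edges_H_eq inside_def
        intro: finite_subset)
  ultimately show ?thesis by (simp add: wf_graph_def)
qed

lemma trace_subset: "trace S \<subseteq> edges H"
  by (auto simp: trace_def edges_H_eq)

lemma trace_edges: "trace (edges G) = edges H"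
  using e0 by (auto simp: trace_def edges_H_eq inside_def)

lemma crossing_U_iff: "f \<in> edges G \<Longrightarrow> odd (inc U (ends G f)) \<longleftrightarrow> f = e0 \<or> f = ek"
proof (cases "ends G f")
  case (Upair c d)
  assume "f \<in> edges G"
  then show ?thesis
    using Upair e0 ek inside_ends outside_ends e0_ne_ek
    by (cases rule: edge_cases) (auto simp: odd_inc_Upair inside_def)
qed

lemma e0_in_iff_ek_in: "even_cover G S \<Longrightarrow> e0 \<in> S \<longleftrightarrow> ek \<in> S"
  using even_cover_crossing_pair[OF wf _ U_verts crossing_U_iff e0_ne_ek] by blast

lemma degS_trace:
  assumes S: "S \<subseteq> edges G" and e0_ek: "e0 \<in> S \<longleftrightarrow> ek \<in> S" and v: "v \<in> U"
  shows "degS H (trace S) v = degS G S v"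
proof -
  have finS: "finite S" using S finite_edges by (rule finite_subset)
  have zero: "inc {v} (ends G f) = 0" if "f \<in> S - inside - {e0, ek}" for f
  proof -
    have "f \<in> edges G" using that S by auto
    then show ?thesis using that v by (cases rule: edge_cases) (auto simp: inc_singleton)
  qed
  have "degS G S v = (\<Sum>f\<in>S \<inter> inside \<union> S \<inter> {e0, ek}. inc {v} (ends G f))"
    unfolding degS_eq_sum_inc[OF finS] using finS zero by (intro sum.mono_neutral_right) auto
  also have "\<dots> = (\<Sum>f\<in>S \<inter> inside. inc {v} (ends G f)) + (\<Sum>f\<in>S \<inter> {e0, ek}. inc {v} (ends G f))"
    using finS cut_edges_not_inside by (intro sum.union_disjoint) auto
  also have "(\<Sum>f\<in>S \<inter> {e0, ek}. inc {v} (ends G f)) = (if e0 \<in> S then inc {v} (Upair a b) else 0)"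
    using e0_ek e0 ek e0_ne_ek v outside_ends by (auto simp: inc_Upair)
  also have "(\<Sum>f\<in>S \<inter> inside. inc {v} (ends G f)) = (\<Sum>f\<in>S \<inter> inside. inc {v} (ends H (Some f)))"
    by (simp add: ends_H_inside)
  also have "(\<Sum>f\<in>S \<inter> inside. inc {v} (ends H (Some f))) + (if e0 \<in> S then inc {v} (Upair a b) else 0)
      = degS H (trace S) v"
    using finS by (simp add: degS_eq_sum_inc trace_def sum.reindex ends_H_None)
  finally show ?thesis by simp
qed

lemma even_cover_trace:
  assumes ec: "even_cover G S"
  shows "even_cover H (trace S)"
proof -
  have "degS H (trace S) v = degS G S v" if "v \<in> U" for v
    using degS_trace[OF _ e0_in_iff_ek_in[OF ec] that] ec by (simp add: even_cover_def)
  then show ?thesis using ec U_verts trace_subset by (auto simp: even_cover_def verts_H)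
qed

lemma deg_H: "v \<in> U \<Longrightarrow> deg H v = deg G v"
  using degS_trace[of "edges G"] e0 ek by (simp add: deg_def trace_edges)

lemma adjS_trace_Some: "f \<in> S \<Longrightarrow> f \<in> inside \<Longrightarrow> ends G f = Upair c d \<Longrightarrow> adjS H (trace S) c d"
  unfolding adjS_def by (rule bexI[of _ "Some f"]) (auto simp: Some_in_trace ends_H_inside)

lemma adjS_trace_None: "e0 \<in> S \<Longrightarrow> adjS H (trace S) a b"
  unfolding adjS_def by (rule bexI[of _ None]) (auto simp: None_in_trace ends_H_None)

lemma reach_lift:
  assumes T: "T \<subseteq> trace S" and None: "None \<in> T \<Longrightarrow> (adjS G S)\<^sup>*\<^sup>* a b"
    and r: "(adjS H T)\<^sup>*\<^sup>* u v"
  shows "(adjS G S)\<^sup>*\<^sup>* u v"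
  using r
proof (induction rule: rtranclp_induct)
  case (step c d)
  obtain g where g: "g \<in> T" "ends H g = Upair c d" using step(2) by (auto simp: adjS_def)
  have "(adjS G S)\<^sup>*\<^sup>* c d"
  proof (cases g)
    case None
    then have "Upair a b = Upair c d" using g ends_H_None by simp
    then show ?thesis using None g(1) assms(2) adjS_reach_sym by (metis Upair_inject)
  next
    case (Some f)
    then show ?thesis using g T by (intro adjS_reach_if_edge[of f]) (auto simp: Some_in_trace ends_H_inside)
  qed
  with step(3) show ?case by (rule rtranclp_trans)
qed simp

lemma reach_ends:
  assumes ec: "even_cover G S" and "e0 \<in> S"
  shows "(adjS G S)\<^sup>*\<^sup>* a b"
proof -
  have "(adjS H (trace S - {None}))\<^sup>*\<^sup>* a b"
    using even_cover_edge_ends_connected[OF wf_H even_cover_trace[OF ec]] \<open>e0 \<in> S\<close>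
    by (simp add: None_in_trace ends_H_None)
  then show ?thesis by (rule reach_lift[rotated 2]) auto
qed

definition project :: "'v \<Rightarrow> 'v" where
  "project w = (if w \<in> U then w else a)"

lemma reach_project:
  assumes S: "S \<subseteq> edges G" and "e0 \<in> S" and r: "(adjS G S)\<^sup>*\<^sup>* u v"
  shows "(adjS H (trace S))\<^sup>*\<^sup>* (project u) (project v)"
  using r
proof (induction rule: rtranclp_induct)
  case (step c d)
  obtain f where f: "f \<in> S" "ends G f = Upair c d" using step(2) by (auto simp: adjS_def)
  have a_b: "(adjS H (trace S))\<^sup>*\<^sup>* b a"
    using adjS_trace_None[OF \<open>e0 \<in> S\<close>] by (auto intro: adjS_reach_sym)
  have "f \<in> edges G" using f S by auto
  then have "(adjS H (trace S))\<^sup>*\<^sup>* (project c) (project d)"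
  proof (cases rule: edge_cases)
    case 1
    then have "c \<in> U" "d \<in> U" using f by (auto simp: inside_def)
    then show ?thesis using adjS_trace_Some[OF f(1) 1 f(2)] by (simp add: project_def)
  next
    case 2
    then show ?thesis using f by (simp add: project_def)
  next
    case 3
    then show ?thesis using f e0 inside_ends outside_ends by (auto simp: project_def)
  next
    case 4
    then show ?thesis using f ek inside_ends outside_ends a_b
      by (auto simp: project_def intro: adjS_reach_sym)
  qed
  with step(3) show ?case by (rule rtranclp_trans)
qed simp

lemma reach_stays_inside:
  assumes S: "S \<subseteq> edges G" and "e0 \<notin> S" "ek \<notin> S" and r: "(adjS G S)\<^sup>*\<^sup>* u v" and "u \<in> U"
  shows "v \<in> U \<and> (adjS H (trace S))\<^sup>*\<^sup>* u v"
  using r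
proof (induction rule: rtranclp_induct)
  case (step c d)
  obtain f where f: "f \<in> S" "ends G f = Upair c d" using step(2) by (auto simp: adjS_def)
  have "f \<in> edges G" using f S by auto
  then have "d \<in> U \<and> adjS H (trace S) c d"
    using f step(3) assms(2,3) adjS_trace_Some[OF f(1) _ f(2)]
    by (cases rule: edge_cases) (auto simp: inside_def)
  then show ?case using step(3) by (meson rtranclp.rtrancl_into_rtrancl)
qed (simp add: \<open>u \<in> U\<close>)

lemma reach_lift_trace:
  assumes ec: "even_cover G S" and r: "(adjS H (trace S))\<^sup>*\<^sup>* u v"
  shows "(adjS G S)\<^sup>*\<^sup>* u v"
  using reach_lift[OF subset_refl _ r] reach_ends[OF ec] by (auto simp: None_in_trace)

lemma comp_of_trace_noncrossing:
  assumes ec: "even_cover G S" and "e0 \<notin> S" and u: "u \<in> U"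
  shows "comp_of G S u = comp_of H (trace S) u"
proof -
  have "S \<subseteq> edges G" "ek \<notin> S" using ec \<open>e0 \<notin> S\<close> e0_in_iff_ek_in[OF ec] by (auto simp: even_cover_def)
  then show ?thesis
    using reach_stays_inside[OF _ \<open>e0 \<notin> S\<close> _ _ u] reach_lift_trace[OF ec] U_verts
    by (auto simp: comp_of_def verts_H)
qed

lemma comp_of_trace:
  assumes ec: "even_cover G S" and "e0 \<in> S" and u: "u \<in> U"
    and not_reach_a: "\<not> (adjS H (trace S))\<^sup>*\<^sup>* u a"
  shows "comp_of G S u = comp_of H (trace S) u"
proof (intro set_eqI iffI)
  fix v assume "v \<in> comp_of G S u"
  then have "v \<in> verts G" "(adjS H (trace S))\<^sup>*\<^sup>* u (project v)"
    using reach_project[of S u v] ec \<open>e0 \<in> S\<close> u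
    by (auto simp: comp_of_def even_cover_def project_def)
  then show "v \<in> comp_of H (trace S) u"
    using not_reach_a by (auto simp: comp_of_def verts_H project_def split: if_splits)
next
  fix v assume "v \<in> comp_of H (trace S) u"
  then show "v \<in> comp_of G S u"
    using reach_lift_trace[OF ec] U_verts by (auto simp: comp_of_def verts_H)
qed

lemma comps_trace_noncrossing:
  assumes ec: "even_cover G S" and "e0 \<notin> S"
  shows "comp_of G S ` U = comps H (trace S)"
  unfolding comps_eq_image_comp_of verts_H
  using comp_of_trace_noncrossing[OF assms] by (rule image_cong[OF refl])

lemma comps_trace_crossing:
  assumes ec: "even_cover G S" and "e0 \<in> S"
  shows "comp_of G S ` U
       = insert (comp_of G S a) (comps H (trace S) - {comp_of H (trace S) a})"
proof (intro equalityI subsetI)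
  fix K assume "K \<in> comp_of G S ` U"
  then obtain u where u: "u \<in> U" "K = comp_of G S u" by blast
  show "K \<in> insert (comp_of G S a) (comps H (trace S) - {comp_of H (trace S) a})"
  proof (cases "(adjS H (trace S))\<^sup>*\<^sup>* u a")
    case True
    then have "K = comp_of G S a" using u(2) comp_of_eq[OF reach_lift_trace[OF ec True]] by simp
    then show ?thesis by simp
  next
    case False
    then have "comp_of H (trace S) u \<noteq> comp_of H (trace S) a"
      using comp_of_eq_iff[of u H] u by (simp add: verts_H)
    moreover have "comp_of H (trace S) u \<in> comps H (trace S)"
      unfolding comps_eq_image_comp_of verts_H using u(1) by (rule imageI)
    ultimately show ?thesis using comp_of_trace[OF assms u(1) False] u(2) by simp
  qed
next
  fix K assume K: "K \<in> insert (comp_of G S a) (comps H (trace S) - {comp_of H (trace S) a})"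
  show "K \<in> comp_of G S ` U"
  proof (cases "K = comp_of G S a")
    case True
    then show ?thesis using inside_ends by simp
  next
    case False
    then obtain u where u: "u \<in> U" "K = comp_of H (trace S) u"
      and ne: "comp_of H (trace S) u \<noteq> comp_of H (trace S) a"
      using K by (auto simp: comps_eq_image_comp_of verts_H)
    then have "\<not> (adjS H (trace S))\<^sup>*\<^sup>* u a" using comp_of_eq[of H "trace S" u a] by blast
    then have "K = comp_of G S u" using comp_of_trace[OF assms u(1)] u(2) by simp
    then show ?thesis using u(1) by (rule image_eqI)
  qed
qed

lemma comps_trace_subset: "K \<in> comps H T \<Longrightarrow> K \<subseteq> U"
  using comps_subset verts_H by blast

lemma cycle_comps_trace:
  assumes ec: "even_cover G S"
  shows "cycle_comps H (trace S) = {K\<in>comps H (trace S). \<exists>v\<in>K. degS G S v \<noteq> 0}"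
  unfolding cycle_comps_def
proof (rule Collect_cong)
  fix K
  have "degS H (trace S) v = degS G S v" if "v \<in> U" for v
    using degS_trace[OF _ e0_in_iff_ek_in[OF ec] that] ec by (simp add: even_cover_def)
  then have "\<forall>v\<in>K. degS H (trace S) v = degS G S v" if "K \<in> comps H (trace S)"
    using comps_trace_subset[OF that] by blast
  then show "(K \<in> comps H (trace S) \<and> (\<exists>v\<in>K. degS H (trace S) v \<noteq> 0))
      \<longleftrightarrow> (K \<in> comps H (trace S) \<and> (\<exists>v\<in>K. degS G S v \<noteq> 0))"
    by force
qed

lemma isolated_verts_trace:
  "even_cover G S \<Longrightarrow> isolated_verts H (trace S) = {v\<in>U. degS G S v = 0}"
  using degS_trace[OF _ e0_in_iff_ek_in] by (auto simp: isolated_verts_def verts_H even_cover_def)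

end

section \<open>Gluing the two sides\<close>

text \<open>For a chain C, G/C is the outer and the closure of C the inner side of the cut
  {e_0, e_k} around W = V(C) - {x, y}.\<close>

locale two_edge_cut =
  outer: cut_side G "verts G - W" e0 ek x x1 y yk Hout +
  inner: cut_side G W e0 ek x1 x yk y Hin
  for G :: "('v, 'e) mgraph" and W :: "'v set" and e0 ek :: 'e and x x1 y yk :: 'v
    and Hout Hin :: "('v, 'e option) mgraph"
begin

lemma verts_G_split: "verts G = (verts G - W) \<union> W"
  using inner.U_verts by blast

lemma insides_disjoint: "outer.inside \<inter> inner.inside = {}"
proof -
  have "set_uprod u \<noteq> {}" for u :: "'v uprod" by (cases u) auto
  then show ?thesis by (auto simp: outer.inside_def inner.inside_def)
qed

lemma comps_split_noncrossing:
  assumes ec: "even_cover G S" and "e0 \<notin> S"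
  shows "comps G S = comps Hout (outer.trace S) \<union> comps Hin (inner.trace S)"
proof -
  have "comps G S = comp_of G S ` (verts G - W) \<union> comp_of G S ` W"
    unfolding comps_eq_image_comp_of by (subst (1) verts_G_split) (rule image_Un)
  then show ?thesis
    by (simp add: outer.comps_trace_noncrossing[OF assms] inner.comps_trace_noncrossing[OF assms])
qed

lemma comps_split_crossing:
  assumes ec: "even_cover G S" and "e0 \<in> S"
  shows "comps G S = insert (comp_of G S x)
     ((comps Hout (outer.trace S) - {comp_of Hout (outer.trace S) x})
      \<union> (comps Hin (inner.trace S) - {comp_of Hin (inner.trace S) x1}))"
proof -
  have "comps G S = comp_of G S ` (verts G - W) \<union> comp_of G S ` W"
    unfolding comps_eq_image_comp_of by (subst (1) verts_G_split) (rule image_Un)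
  moreover have "comp_of G S x1 = comp_of G S x"
    using outer.e0 \<open>e0 \<in> S\<close> by (metis adjS_reach_if_edge adjS_reach_sym comp_of_eq)
  ultimately show ?thesis
    by (simp add: outer.comps_trace_crossing[OF assms] inner.comps_trace_crossing[OF assms])
qed

lemma comps_sides_disjoint: "comps Hout T \<inter> comps Hin T' = {}"
proof -
  have "K \<notin> comps Hin T'" if K: "K \<in> comps Hout T" for K
  proof
    assume "K \<in> comps Hin T'"
    then have "K \<subseteq> W" using comps_subset inner.verts_H by blast
    moreover have "K \<subseteq> verts G - W" using K comps_subset outer.verts_H by blast
    ultimately show False using comps_nonempty[OF K] by blast
  qed
  then show ?thesis by blast
qed

lemma finite_cycle_comps_sides: "finite (cycle_comps Hout T)" "finite (cycle_comps Hin T')"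
  using finite_comps[of Hout] finite_comps[of Hin] outer.wf_H inner.wf_H
  unfolding wf_graph_def cycle_comps_def by auto

lemma card_isolated_verts_split:
  assumes ec: "even_cover G S"
  shows "card (isolated_verts G S)
       = card (isolated_verts Hout (outer.trace S)) + card (isolated_verts Hin (inner.trace S))"
proof -
  have "isolated_verts G S
      = isolated_verts Hout (outer.trace S) \<union> isolated_verts Hin (inner.trace S)"
    unfolding outer.isolated_verts_trace[OF ec] inner.isolated_verts_trace[OF ec]
    using inner.U_verts by (auto simp: isolated_verts_def)
  moreover have "finite (isolated_verts Hout (outer.trace S))" "finite (isolated_verts Hin (inner.trace S))"
    using outer.wf_H inner.wf_H by (auto simp: isolated_verts_def wf_graph_def)
  moreover have "isolated_verts Hout (outer.trace S) \<inter> isolated_verts Hin (inner.trace S) = {}"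
    using outer.verts_H inner.verts_H by (auto simp: isolated_verts_def)
  ultimately show ?thesis by (simp add: card_Un_disjoint)
qed

lemma exc_of_split_noncrossing:
  assumes ec: "even_cover G S" and "e0 \<notin> S"
  shows "exc_of G S = exc_of Hout (outer.trace S) + exc_of Hin (inner.trace S)"
proof -
  have "cycle_comps G S = cycle_comps Hout (outer.trace S) \<union> cycle_comps Hin (inner.trace S)"
    unfolding outer.cycle_comps_trace[OF ec] inner.cycle_comps_trace[OF ec]
    by (auto simp: cycle_comps_def comps_split_noncrossing[OF assms])
  moreover have "cycle_comps Hout (outer.trace S) \<inter> cycle_comps Hin (inner.trace S) = {}"
    using comps_sides_disjoint by (auto simp: cycle_comps_def)
  ultimately show ?thesis
    by (simp add: exc_of_eq card_Un_disjoint finite_cycle_comps_sides card_isolated_verts_split[OF ec])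
qed

lemma exc_of_split_crossing:
  assumes ec: "even_cover G S" and "e0 \<in> S"
  shows "exc_of G S + 2 = exc_of Hout (outer.trace S) + exc_of Hin (inner.trace S)"
proof -
  let ?C1 = "cycle_comps Hout (outer.trace S)" and ?C2 = "cycle_comps Hin (inner.trace S)"
  let ?K1 = "comp_of Hout (outer.trace S) x" and ?K2 = "comp_of Hin (inner.trace S) x1"
  let ?K = "comp_of G S x"
  have finS: "finite S" using even_cover_finite[OF outer.wf ec] .
  have deg: "degS G S x \<noteq> 0" "degS G S x1 \<noteq> 0"
    using degS_pos[OF finS \<open>e0 \<in> S\<close>, of _ G] outer.e0 by auto
  have x_x1: "x \<in> ?K" "x1 \<in> ?K"
    using outer.e0 \<open>e0 \<in> S\<close> outer.U_verts outer.inside_ends inner.U_verts inner.inside_ends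
    by (auto simp: comp_of_def intro: adjS_reach_if_edge)
  have cycles: "cycle_comps G S = insert ?K ((?C1 - {?K1}) \<union> (?C2 - {?K2}))"
    unfolding outer.cycle_comps_trace[OF ec] inner.cycle_comps_trace[OF ec]
    using x_x1 deg by (auto simp: cycle_comps_def comps_split_crossing[OF assms])
  have "?K1 \<in> ?C1" "?K2 \<in> ?C2"
    unfolding outer.cycle_comps_trace[OF ec] inner.cycle_comps_trace[OF ec]
    using deg outer.inside_ends inner.inside_ends
    by (auto simp: comps_eq_image_comp_of outer.verts_H inner.verts_H intro!: comp_of_self)
  moreover have "?C1 \<inter> ?C2 = {}"
    using comps_sides_disjoint by (auto simp: cycle_comps_def)
  moreover have "?K \<notin> ?C1 \<union> ?C2"
  proof
    assume "?K \<in> ?C1 \<union> ?C2"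
    then have "?K \<in> comps Hout (outer.trace S) \<or> ?K \<in> comps Hin (inner.trace S)"
      by (auto simp: cycle_comps_def)
    then have "?K \<subseteq> verts Hout \<or> ?K \<subseteq> verts Hin" using comps_subset by blast
    then show False
      using x_x1 outer.inside_ends inner.inside_ends outer.verts_H inner.verts_H by blast
  qed
  ultimately have "card (cycle_comps G S) + 1 = card ?C1 + card ?C2"
    unfolding cycles by (intro card_insert_Diff_Un_Diff finite_cycle_comps_sides)
  then show ?thesis using card_isolated_verts_split[OF ec] by (simp add: exc_of_eq)
qed

definition glue :: "'e option set \<Rightarrow> 'e option set \<Rightarrow> 'e set" where
  "glue A B = {f. Some f \<in> A} \<union> {f. Some f \<in> B} \<union> (if None \<in> A then {e0, ek} else {})"

lemma glue_traces:
  assumes A: "A \<subseteq> edges Hout" and B: "B \<subseteq> edges Hin" and None: "None \<in> A \<longleftrightarrow> None \<in> B"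
  shows "glue A B \<subseteq> edges G" "e0 \<in> glue A B \<longleftrightarrow> ek \<in> glue A B"
    "outer.trace (glue A B) = A" "inner.trace (glue A B) = B"
proof -
  have A_inside: "Some f \<in> A \<Longrightarrow> f \<in> outer.inside" for f
    using A by (auto simp: outer.edges_H_eq)
  have B_inside: "Some f \<in> B \<Longrightarrow> f \<in> inner.inside" for f
    using B by (auto simp: inner.edges_H_eq)
  show "glue A B \<subseteq> edges G"
    using A_inside B_inside outer.e0 outer.ek
    by (auto simp: glue_def outer.inside_def inner.inside_def)
  have e0_ek: "e0 \<in> glue A B \<longleftrightarrow> None \<in> A" "ek \<in> glue A B \<longleftrightarrow> None \<in> A"
    using A_inside B_inside outer.cut_edges_not_inside inner.cut_edges_not_inside
    by (auto simp: glue_def)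
  then show "e0 \<in> glue A B \<longleftrightarrow> ek \<in> glue A B" by simp
  show "outer.trace (glue A B) = A"
  proof (intro set_eqI)
    fix g show "g \<in> outer.trace (glue A B) \<longleftrightarrow> g \<in> A"
      using A_inside B_inside insides_disjoint outer.cut_edges_not_inside e0_ek
      by (cases g) (auto simp: outer.None_in_trace outer.Some_in_trace glue_def)
  qed
  show "inner.trace (glue A B) = B"
  proof (intro set_eqI)
    fix g show "g \<in> inner.trace (glue A B) \<longleftrightarrow> g \<in> B"
      using A_inside B_inside insides_disjoint inner.cut_edges_not_inside e0_ek None
      by (cases g) (auto simp: inner.None_in_trace inner.Some_in_trace glue_def)
  qed
qed

lemma even_cover_glue:
  assumes A: "even_cover Hout A" and B: "even_cover Hin B" and None: "None \<in> A \<longleftrightarrow> None \<in> B"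
  shows "even_cover G (glue A B)"
proof -
  note traces = glue_traces[OF _ _ None] A B
  have "degS G (glue A B) v = 0 \<or> degS G (glue A B) v = 2" if v: "v \<in> verts G" for v
  proof (cases "v \<in> W")
    case True
    then have "degS G (glue A B) v = degS Hin B v"
      using inner.degS_trace[of "glue A B" v] traces by (simp add: even_cover_def)
    then show ?thesis using B True by (simp add: even_cover_def inner.verts_H)
  next
    case False
    then have "degS G (glue A B) v = degS Hout A v"
      using outer.degS_trace[of "glue A B" v] traces v by (simp add: even_cover_def)
    then show ?thesis using A False v by (simp add: even_cover_def outer.verts_H)
  qed
  then show ?thesis using traces by (simp add: even_cover_def)
qed

lemma glue_even_covers:
  assumes A: "even_cover Hout A" and B: "even_cover Hin B" and None: "None \<in> A \<longleftrightarrow> None \<in> B"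
  obtains S where "even_cover G S" "outer.trace S = A" "inner.trace S = B"
  using that even_cover_glue[OF assms] glue_traces[OF _ _ None] A B by (auto simp: even_cover_def)

lemma traces_even_covers:
  assumes "even_cover G S"
  shows "even_cover Hout (outer.trace S)" "even_cover Hin (inner.trace S)"
    "None \<in> outer.trace S \<longleftrightarrow> e0 \<in> S" "None \<in> inner.trace S \<longleftrightarrow> e0 \<in> S"
  using assms by (simp_all add: outer.even_cover_trace inner.even_cover_trace
      outer.None_in_trace inner.None_in_trace)

lemma exc_with_split:
  assumes e_iff_e0: "\<And>S. even_cover G S \<Longrightarrow> e \<in> S \<longleftrightarrow> e0 \<in> S"
  shows "exc_with G e = exc_with Hout None + exc_with Hin None"
proof -
  have "(INF S\<in>{S. even_cover G S \<and> e \<in> S}. ereal (real (exc_of G S))) + ereal (real 2)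
      = (INF T\<in>{T. even_cover Hout T \<and> None \<in> T}. ereal (real (exc_of Hout T)))
      + (INF T\<in>{T. even_cover Hin T \<and> None \<in> T}. ereal (real (exc_of Hin T)))"
  proof (rule INF_ereal_add_split[where f = outer.trace and g = inner.trace])
    fix S assume "S \<in> {S. even_cover G S \<and> e \<in> S}"
    then show "outer.trace S \<in> {T. even_cover Hout T \<and> None \<in> T}
        \<and> inner.trace S \<in> {T. even_cover Hin T \<and> None \<in> T}
        \<and> exc_of G S + 2 = exc_of Hout (outer.trace S) + exc_of Hin (inner.trace S)"
      using traces_even_covers exc_of_split_crossing e_iff_e0 by auto
  next
    fix A B assume "A \<in> {T. even_cover Hout T \<and> None \<in> T}" "B \<in> {T. even_cover Hin T \<and> None \<in> T}"
    then show "\<exists>S\<in>{S. even_cover G S \<and> e \<in> S}. outer.trace S = A \<and> inner.trace S = B"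
      using glue_even_covers[of A B] traces_even_covers e_iff_e0 by (metis mem_Collect_eq)
  qed
  then show ?thesis
    unfolding exc_with_def by (intro ereal_diff_add_split) (auto intro: INF_greatest)
qed

lemma exc_without_split:
  assumes e_iff_e0: "\<And>S. even_cover G S \<Longrightarrow> e \<in> S \<longleftrightarrow> e0 \<in> S"
  shows "exc_without G e = exc_without Hout None + exc_without Hin None"
proof -
  have "(INF S\<in>{S. even_cover G S \<and> e \<notin> S}. ereal (real (exc_of G S))) + ereal (real 0)
      = (INF T\<in>{T. even_cover Hout T \<and> None \<notin> T}. ereal (real (exc_of Hout T)))
      + (INF T\<in>{T. even_cover Hin T \<and> None \<notin> T}. ereal (real (exc_of Hin T)))"
  proof (rule INF_ereal_add_split[where f = outer.trace and g = inner.trace])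
    fix S assume "S \<in> {S. even_cover G S \<and> e \<notin> S}"
    then show "outer.trace S \<in> {T. even_cover Hout T \<and> None \<notin> T}
        \<and> inner.trace S \<in> {T. even_cover Hin T \<and> None \<notin> T}
        \<and> exc_of G S + 0 = exc_of Hout (outer.trace S) + exc_of Hin (inner.trace S)"
      using traces_even_covers exc_of_split_noncrossing e_iff_e0 by auto
  next
    fix A B assume "A \<in> {T. even_cover Hout T \<and> None \<notin> T}" "B \<in> {T. even_cover Hin T \<and> None \<notin> T}"
    then show "\<exists>S\<in>{S. even_cover G S \<and> e \<notin> S}. outer.trace S = A \<and> inner.trace S = B"
      using glue_even_covers[of A B] traces_even_covers e_iff_e0 by (metis mem_Collect_eq)
  qed
  then show ?thesis by (simp add: exc_without_def)
qed

lemma nn2_split: "nn2 G = nn2 Hout + nn2 Hin"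
proof -
  have fin: "finite (verts G)" by (rule outer.finite_verts)
  have "card (verts G) = card (verts Hout) + card (verts Hin)"
    using fin inner.U_verts card_Diff_subset[of W "verts G"] card_mono[of "verts G" W]
    by (simp add: outer.verts_H inner.verts_H finite_subset)
  moreover have "{v\<in>verts G. deg G v = 2} = {v\<in>verts Hout. deg Hout v = 2} \<union> {v\<in>verts Hin. deg Hin v = 2}"
  proof (intro set_eqI)
    fix v show "v \<in> {v\<in>verts G. deg G v = 2}
        \<longleftrightarrow> v \<in> {v\<in>verts Hout. deg Hout v = 2} \<union> {v\<in>verts Hin. deg Hin v = 2}"
      using outer.deg_H[of v] inner.deg_H[of v] inner.U_verts
      by (cases "v \<in> W") (auto simp: outer.verts_H inner.verts_H)
  qed
  moreover have "card ({v\<in>verts Hout. deg Hout v = 2} \<union> {v\<in>verts Hin. deg Hin v = 2})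
      = card {v\<in>verts Hout. deg Hout v = 2} + card {v\<in>verts Hin. deg Hin v = 2}"
    using fin inner.U_verts
    by (intro card_Un_disjoint) (auto simp: outer.verts_H inner.verts_H intro: finite_subset)
  ultimately show ?thesis by (simp add: nn2_def)
qed

lemma delta_split:
  assumes e_iff_e0: "\<And>S. even_cover G S \<Longrightarrow> e \<in> S \<longleftrightarrow> e0 \<in> S"
  shows "delta G e = delta Hout None + delta Hin None
       \<and> delta_hat G e = delta_hat Hout None + delta_hat Hin None"
  unfolding delta_def delta_hat_def
  by (simp only: exc_with_split[OF e_iff_e0] exc_without_split[OF e_iff_e0] nn2_split
      add_divide_distrib ereal_add_diff_add exc_with_not_MInfty exc_without_not_MInfty
      not_False_eq_True simp_thms)

end

section \<open>Subcubic chains\<close>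

locale graph_chain =
  fixes G C :: "('v, 'e) mgraph" and x y :: 'v and es :: "'e list" and Bs :: "'v set list"
  assumes wf: "wf_graph G" and chain: "chain_of G C x es Bs y"
begin

abbreviation m :: nat where "m \<equiv> length es"
abbreviation W :: "'v set" where "W \<equiv> verts C - {x, y}"

definition x1 :: 'v where "x1 = (THE u. ends C (hd es) = Upair x u)"
definition yk :: 'v where "yk = (THE u. ends C (last es) = Upair u y)"

lemma subcubic_chain: "subcubic_chain C x es Bs y"
  and length_es: "m \<ge> 2"
  and W_comp: "W \<in> comps G (edges G - {hd es, last es})"
  and W_edges: "{f\<in>edges C. set_uprod (ends C f) \<inter> {x, y} = {}}
       = {f\<in>edges G - {hd es, last es}. set_uprod (ends G f) \<subseteq> W}"
  and verts_C: "verts C \<subseteq> verts G" and edges_C: "edges C \<subseteq> edges G"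
  and ends_C: "\<And>f. f \<in> edges C \<Longrightarrow> ends C f = ends G f"
  using chain by (auto simp: chain_of_def subgraph_def)

lemma wf_C: "wf_graph C" and length_Bs: "length Bs = m + 1"
  and distinct_es: "distinct es" and distinct_Bs: "distinct Bs"
  and set_Bs: "set Bs = comps C (edges C - set es)"
  and set_es: "set es \<subseteq> edges C"
  and hd_Bs: "hd Bs = {x}" and last_Bs: "last Bs = {y}"
  and link: "\<And>i. i < m \<Longrightarrow> \<exists>u\<in>Bs ! i. \<exists>v\<in>Bs ! (i + 1). ends C (es ! i) = Upair u v"
  using subcubic_chain by (auto simp: subcubic_chain_def cut_edge_def)

lemma block_comp: "j < length Bs \<Longrightarrow> Bs ! j \<in> comps C (edges C - set es)"
  using set_Bs nth_mem by metis

lemma block_index_unique: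
  "j < length Bs \<Longrightarrow> j' < length Bs \<Longrightarrow> v \<in> Bs ! j \<Longrightarrow> v \<in> Bs ! j' \<Longrightarrow> j = j'"
  using comps_disjoint[OF block_comp block_comp] distinct_Bs nth_eq_iff_index_eq by metis

lemma block_verts: "j < length Bs \<Longrightarrow> Bs ! j \<subseteq> verts C"
  using comps_subset block_comp by metis

lemma in_some_block:
  assumes "v \<in> verts C"
  obtains j where "j < length Bs" "v \<in> Bs ! j"
proof -
  have "comp_of C (edges C - set es) v \<in> set Bs"
    using set_Bs assms by (simp add: comps_eq_image_comp_of)
  then obtain j where "j < length Bs" "Bs ! j = comp_of C (edges C - set es) v"
    by (auto simp: in_set_conv_nth)
  then show ?thesis using that comp_of_self[OF assms] by auto
qed

lemma es_nonempty: "es \<noteq> []" and Bs_nonempty: "Bs \<noteq> []"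
  using length_es length_Bs by auto

lemma first_block: "Bs ! 0 = {x}" and last_block: "Bs ! m = {y}"
  using hd_Bs last_Bs length_Bs hd_conv_nth[OF Bs_nonempty] last_conv_nth[OF Bs_nonempty] by auto

lemma inner_block_in_W: "0 < j \<Longrightarrow> j < m \<Longrightarrow> Bs ! j \<subseteq> W"
  using block_index_unique[of j 0] block_index_unique[of j m] block_verts[of j]
    first_block last_block length_Bs by fastforce

lemma hd_es: "hd es = es ! 0" and last_es: "last es = es ! (m - 1)"
  using hd_conv_nth[OF es_nonempty] last_conv_nth[OF es_nonempty] by auto

lemma ends_hd_es: "ends C (hd es) = Upair x x1" "x1 \<in> Bs ! 1"
proof -
  obtain u v where uv: "u \<in> Bs ! 0" "v \<in> Bs ! 1" "ends C (es ! 0) = Upair u v"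
    using link[of 0] es_nonempty by auto
  then have "(THE w. ends C (hd es) = Upair x w) = v"
    using first_block hd_es by (intro the_equality) auto
  then show "ends C (hd es) = Upair x x1" "x1 \<in> Bs ! 1"
    using uv first_block hd_es by (auto simp: x1_def)
qed

lemma ends_last_es: "ends C (last es) = Upair yk y" "yk \<in> Bs ! (m - 1)"
proof -
  obtain u v where uv: "u \<in> Bs ! (m - 1)" "v \<in> Bs ! m" "ends C (es ! (m - 1)) = Upair u v"
    using link[of "m - 1"] es_nonempty by auto
  then have "(THE w. ends C (last es) = Upair w y) = u"
    using last_block last_es by (intro the_equality) auto
  then show "ends C (last es) = Upair yk y" "yk \<in> Bs ! (m - 1)"
    using uv last_block last_es by (auto simp: yk_def)
qed

lemma x1_in_W: "x1 \<in> W" and yk_in_W: "yk \<in> W"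
proof -
  have "Bs ! 1 \<subseteq> W" "Bs ! (m - 1) \<subseteq> W" using inner_block_in_W length_es by auto
  then show "x1 \<in> W" "yk \<in> W" using ends_hd_es(2) ends_last_es(2) by blast+
qed

lemma x_y_verts: "x \<in> verts G" "y \<in> verts G"
  using block_verts[of 0] block_verts[of m] first_block last_block length_Bs verts_C by auto

lemma hd_ne_last_es: "hd es \<noteq> last es"
  using distinct_es length_es hd_es last_es nth_eq_iff_index_eq[of es 0 "m - 1"] es_nonempty
  by auto

lemma hd_last_es_edges_C: "hd es \<in> edges C" "last es \<in> edges C"
  using set_es hd_in_set[OF es_nonempty] last_in_set[OF es_nonempty] by auto

lemma hd_last_es_edges: "hd es \<in> edges G" "last es \<in> edges G"
  using hd_last_es_edges_C edges_C by auto

lemma ends_G_hd_last: "ends G (hd es) = Upair x x1" "ends G (last es) = Upair yk y"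
  using ends_hd_es ends_last_es ends_C hd_last_es_edges_C by auto

lemma W_no_crossing:
  assumes f: "f \<in> edges G" "f \<noteq> hd es" "f \<noteq> last es"
  shows "set_uprod (ends G f) \<subseteq> W \<or> set_uprod (ends G f) \<inter> W = {}"
proof (rule ccontr)
  obtain c d where cd: "ends G f = Upair c d" by (cases "ends G f") auto
  assume "\<not> ?thesis"
  then obtain a b where ab: "a \<in> W" "b \<notin> W" "ends G f = Upair a b"
    using cd by auto
  moreover have "b \<in> verts G" using wf_graph_Upair_verts[OF wf f(1) ab(3)] by blast
  ultimately show False using comps_edge_closed[OF W_comp ab(1), of f b] f by auto
qed

lemma edges_G_cases:
  assumes f: "f \<in> edges G"
  shows "f \<in> edges C \<or> set_uprod (ends G f) \<inter> W = {}"
proof (cases "f = hd es \<or> f = last es")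
  case False
  then have "f \<in> edges C" if "set_uprod (ends G f) \<subseteq> W"
    using W_edges f that by blast
  then show ?thesis using W_no_crossing f False by blast
qed (use hd_last_es_edges_C in auto)

definition blocks_upto :: "nat \<Rightarrow> 'v set" where
  "blocks_upto i = (\<Union>l\<in>{1..i}. Bs ! l)"

lemma mem_blocks_upto:
  assumes "i < m" "j < length Bs" "v \<in> Bs ! j"
  shows "v \<in> blocks_upto i \<longleftrightarrow> 1 \<le> j \<and> j \<le> i"
proof
  assume "v \<in> blocks_upto i"
  then obtain l where "l \<in> {1..i}" "v \<in> Bs ! l" by (auto simp: blocks_upto_def)
  moreover have "l < length Bs" using \<open>l \<in> {1..i}\<close> assms(1) length_Bs by auto
  ultimately show "1 \<le> j \<and> j \<le> i" using block_index_unique[OF assms(2)] assms(3) by auto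
qed (use assms(3) in \<open>auto simp: blocks_upto_def\<close>)

lemma blocks_upto_subset: "i < m \<Longrightarrow> blocks_upto i \<subseteq> W"
  unfolding blocks_upto_def by (intro UN_least inner_block_in_W) auto

lemma blocks_upto_crossing:
  assumes i: "0 < i" "i < m" and f: "f \<in> edges G"
  shows "odd (inc (blocks_upto i) (ends G f)) \<longleftrightarrow> f = es ! 0 \<or> f = es ! i"
proof -
  have es_nth_eq: "es ! j = es ! k \<longleftrightarrow> j = k" if "j < m" "k < m" for j k
    using distinct_es that by (simp add: nth_eq_iff_index_eq)
  consider (chain) j where "j < m" "f = es ! j" | (block) "f \<in> edges C - set es"
    | (outside) "f \<notin> edges C" "set_uprod (ends G f) \<inter> W = {}"
    using edges_G_cases[OF f] by (auto simp: in_set_conv_nth)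
  then show ?thesis
  proof cases
    case chain
    then obtain u v where uv: "u \<in> Bs ! j" "v \<in> Bs ! (j + 1)" "ends G f = Upair u v"
      using link set_es ends_C by (metis nth_mem subsetD)
    then have "u \<in> blocks_upto i \<longleftrightarrow> 1 \<le> j \<and> j \<le> i" "v \<in> blocks_upto i \<longleftrightarrow> j + 1 \<le> i"
      using mem_blocks_upto[OF i(2)] chain length_Bs by auto
    moreover have "es ! j = es ! 0 \<longleftrightarrow> j = 0" "es ! j = es ! i \<longleftrightarrow> j = i"
      using es_nth_eq[of j 0] es_nth_eq[of j i] chain(1) i es_nonempty by auto
    ultimately show ?thesis using uv chain i by (auto simp: odd_inc_Upair)
  next
    case block
    obtain c d where cd: "ends C f = Upair c d" by (cases "ends C f") auto
    then have cd_verts: "c \<in> verts C" "d \<in> verts C"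
      using wf_graph_Upair_verts[OF wf_C] block by blast+
    obtain j where j: "j < length Bs" "c \<in> Bs ! j" using in_some_block[OF cd_verts(1)] .
    have "d \<in> Bs ! j" by (rule comps_edge_closed[OF block_comp[OF j(1)] j(2) block cd cd_verts(2)])
    then have "c \<in> blocks_upto i \<longleftrightarrow> d \<in> blocks_upto i" using mem_blocks_upto[OF i(2)] j by blast
    moreover have "es ! 0 \<in> set es" "es ! i \<in> set es" using i by (auto intro!: nth_mem)
    ultimately show ?thesis using block cd ends_C by (auto simp: odd_inc_Upair)
  next
    case outside
    then have "set_uprod (ends G f) \<inter> blocks_upto i = {}" using blocks_upto_subset[OF i(2)] by blast
    moreover have "es ! 0 \<in> edges C" "es ! i \<in> edges C" using i set_es by (auto intro!: nth_mem)
    ultimately show ?thesis using outside by (cases "ends G f") (auto simp: odd_inc_Upair)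
  qed
qed

lemma chain_edge_in_even_cover_iff:
  assumes e: "e \<in> set es" and ec: "even_cover G S"
  shows "e \<in> S \<longleftrightarrow> hd es \<in> S"
proof -
  obtain i where i: "i < m" "e = es ! i" using e by (auto simp: in_set_conv_nth)
  show ?thesis
  proof (cases "i = 0")
    case False
    have "blocks_upto i \<subseteq> verts G" using blocks_upto_subset[OF i(1)] verts_C by blast
    moreover have "es ! i \<noteq> es ! 0"
      using nth_eq_iff_index_eq[OF distinct_es, of i 0] i False es_nonempty by auto
    ultimately show ?thesis
      using even_cover_crossing_pair[OF wf ec _ blocks_upto_crossing] i False hd_es by auto
  qed (simp add: i hd_es)
qed

lemma contract_chain_edges:
  "{f\<in>edges G. set_uprod (ends G f) \<inter> W = {}} = {f\<in>edges G. set_uprod (ends G f) \<subseteq> verts G - W}"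
  using wf by (auto simp: wf_graph_def)

lemma closure_chain_edges:
  "{f\<in>edges C. set_uprod (ends C f) \<inter> {x, y} = {}} = {f\<in>edges G. set_uprod (ends G f) \<subseteq> W}"
  using W_edges ends_G_hd_last by auto

lemma ends_G_verts: "f \<in> edges G \<Longrightarrow> set_uprod (ends G f) \<subseteq> verts G"
  using wf by (auto simp: wf_graph_def)

sublocale two_edge_cut G W "hd es" "last es" x x1 y yk
  "contract_chain G C x y" "closure_chain C x es y"
proof unfold_locales
  show "ends G (last es) = Upair y yk" "ends G (last es) = Upair yk y"
    using ends_G_hd_last by (auto simp: Upair_inject)
  show "\<And>f. f \<in> edges G \<Longrightarrow> f \<noteq> hd es \<Longrightarrow> f \<noteq> last es \<Longrightarrow>
      set_uprod (ends G f) \<subseteq> verts G - W \<or> set_uprod (ends G f) \<inter> (verts G - W) = {}"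
    using W_no_crossing ends_G_verts by blast
  show "\<And>f. f \<in> edges G \<Longrightarrow> f \<noteq> hd es \<Longrightarrow> f \<noteq> last es \<Longrightarrow>
      set_uprod (ends G f) \<subseteq> W \<or> set_uprod (ends G f) \<inter> W = {}"
    by (rule W_no_crossing)
  show "edges (contract_chain G C x y)
      = insert None (Some ` {f\<in>edges G. set_uprod (ends G f) \<subseteq> verts G - W})"
    by (simp add: contract_chain_def contract_chain_edges)
  show "edges (closure_chain C x es y) = insert None (Some ` {f\<in>edges G. set_uprod (ends G f) \<subseteq> W})"
    unfolding closure_chain_def Let_def closure_chain_edges[symmetric] by simp
  show "\<And>f. f \<in> edges G \<Longrightarrow> set_uprod (ends G f) \<subseteq> W \<Longrightarrow> ends (closure_chain C x es y) (Some f) = ends G f"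
    using closure_chain_edges ends_C by (auto simp: closure_chain_def Let_def)
qed (use wf verts_C hd_ne_last_es hd_last_es_edges ends_G_hd_last x1_in_W yk_in_W x_y_verts
    in \<open>auto simp: contract_chain_def closure_chain_def Let_def x1_def yk_def\<close>)

end

theorem proposition2p2:
  fixes G C :: "('v, 'e) mgraph" and x y :: 'v and es :: "'e list" and Bs :: "'v set list"
    and e :: 'e
  assumes "wf_graph G"
    and "chain_of G C x es Bs y"
    and "e \<in> set es"
  shows "delta G e = delta (contract_chain G C x y) None + delta (closure_chain C x es y) None
       \<and> delta_hat G e = delta_hat (contract_chain G C x y) None
                         + delta_hat (closure_chain C x es y) None"
proof -
  interpret graph_chain G C x y es Bs using assms(1,2) by unfold_locales
  show ?thesis using delta_split chain_edge_in_even_cover_iff[OF assms(3)] by blast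
qed

end
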